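(* Let $p$ be a prime and $(K,|\cdot|)$ an ultrametric field of characteristic $p$. Let $\lambda\in K$ with $|\lambda|=1$ such that the order $q$ of $\widetilde\lambda$ in $\widetilde K^*$ is finite, and suppose $\lambda^q\ne1$. Let $S(z)\in\mathcal{O}_K[z]$ satisfy $S(0)=1$ and $\mathrm{wideg}(S(z)-1)<\infty$, and put $Q(z)=\lambda zS(z)^p$. Then the minimal period of every periodic point of $Q$ in $\mathfrak{m}_K\setminus\{0\}$ equals $q$. Furthermore, the set $F$ of all such points is non-empty and finite, and for each $a\in F$ the multiplicity $m_a$ of $a$ as a fixed point of $Q^q$ is finite and divisible by $p$, and for every integer $n\ge1$ the multiplicity of $a$ as a fixed point of $Q^{qp^n}$ equals $p^nm_a$.
   Context: $\mathcal{O}_K=\{|z|\le1\}$, $\mathfrak{m}_K=\{|z|<1\}$, $\widetilde K=\mathcal{O}_K/\mathfrak{m}_K$. For $h\in\mathcal{O}_K[[z]]$, $\mathrm{wideg}(h)$ is the order (lowest degree of a nonzero term) of its coefficientwise reduction in $\widetilde K[[\zeta]]$. Periodic points and fixed points are considered in $\mathfrak{m}_K$ (points in an algebraic closure of $K$ with norm $<1$ may be taken, extending $|\cdot|$); the multiplicity of $a$ as a fixed point of $Q^m$ is its multiplicity as a zero of $Q^m(z)-z$. *)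

theory Defs
  imports "HOL-Computational_Algebra.Polynomial" "HOL-Library.Extended_Nat"
begin

definition ultrametric_abs :: "('a::field \<Rightarrow> real) \<Rightarrow> bool" where
  "ultrametric_abs v \<longleftrightarrow>
     (\<forall>x. v x \<ge> 0) \<and> (\<forall>x. v x = 0 \<longleftrightarrow> x = 0) \<and>
     (\<forall>x y. v (x * y) = v x * v y) \<and>
     (\<forall>x y. v (x + y) \<le> max (v x) (v y))"

definition is_subfield :: "'a::field set \<Rightarrow> bool" where
  "is_subfield K \<longleftrightarrow> 0 \<in> K \<and> 1 \<in> K \<and>
     (\<forall>x\<in>K. \<forall>y\<in>K. x + y \<in> K \<and> x * y \<in> K) \<and>
     (\<forall>x\<in>K. - x \<in> K) \<and> (\<forall>x\<in>K. x \<noteq> 0 \<longrightarrow> inverse x \<in> K)"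

text \<open>\<open>q\<close> is the (finite) order of the residue class of \<open>l\<close> (with \<open>v l = 1\<close>)
  in the multiplicative group of the residue field: the least \<open>q > 0\<close>
  with \<open>l^q \<equiv> 1\<close> modulo the maximal ideal.\<close>
definition residue_order_is :: "('a::field \<Rightarrow> real) \<Rightarrow> 'a \<Rightarrow> nat \<Rightarrow> bool" where
  "residue_order_is v l q \<longleftrightarrow> q > 0 \<and> v (l ^ q - 1) < 1 \<and>
     (\<forall>k. 0 < k \<and> k < q \<longrightarrow> \<not> v (l ^ k - 1) < 1)"

text \<open>Weierstrass degree of a power series with integral coefficients: the order of
  its coefficientwise reduction (a coefficient reduces to nonzero iff it has
  absolute value 1); \<open>\<infinity>\<close> if the reduction is zero.\<close>
definition wideg :: "('a::field \<Rightarrow> real) \<Rightarrow> 'a poly \<Rightarrow> enat" where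
  "wideg v f = (if \<exists>n. v (coeff f n) = 1
                then enat (LEAST n. v (coeff f n) = 1) else \<infinity>)"

definition poly_iter :: "'a::comm_ring_1 poly \<Rightarrow> nat \<Rightarrow> 'a poly" where
  "poly_iter Q m = ((\<lambda>f. pcompose Q f) ^^ m) [:0, 1:]"

definition minimal_period :: "('a \<Rightarrow> 'a) \<Rightarrow> 'a \<Rightarrow> nat" where
  "minimal_period f a = (LEAST m. m > 0 \<and> (f ^^ m) a = a)"

end

theory Submission
  imports Defs "HOL-Computational_Algebra.Primes"
begin

text \<open>Choose \<open>\<nu>\<close> with \<open>\<nu>^p = 1/\<lambda>\<close>. In characteristic \<open>p\<close> the Frobenius gives
  \<open>Q(z) - z = \<lambda> z (S(z) - \<nu>)^p\<close>, and every iterate keeps this shape: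
  \<open>Q^k = \<lambda>^k z W\<^sub>k(z)^p\<close> with \<open>W\<^sub>k \<equiv> S^k\<close> modulo \<open>z (S - \<nu>)^p\<close>. At a periodic point \<open>a\<close> of
  period \<open>m\<close> in the maximal ideal this forces \<open>\<lambda>^m \<equiv> 1\<close>, hence \<open>q | m\<close>, and an ultrametric
  estimate shows that \<open>a\<close> is a root of \<open>W\<^sub>q - \<nu>^q\<close>; conversely every such root is fixed by
  \<open>Q^q\<close>. The periodic points are therefore the nonzero small roots of \<open>W\<^sub>q - \<nu>^q\<close>, their
  multiplicities in \<open>Q^q(z) - z = \<lambda>^q z (W\<^sub>q - \<nu>^q)^p\<close> are multiples of \<open>p\<close>, and passing
  from \<open>Q^q\<close> to \<open>Q^(qp)\<close> replaces \<open>W\<^sub>q - \<nu>^q\<close> by its \<open>p\<close>-th power times a unit. A small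
  root exists because the constant coefficient of \<open>W\<^sub>q - \<nu>^q\<close> is small while, the reduction
  of \<open>Q^q\<close> not being \<open>z\<close> (here \<open>wideg(S - 1) < \<infinity>\<close> is used), some coefficient is a unit.\<close>

lemma freshmans_dream_diff:
  fixes x y :: "'a::comm_ring_1"
  assumes "prime CHAR('a)"
  shows "(x - y) ^ CHAR('a) = x ^ CHAR('a) - y ^ CHAR('a)"
  using freshmans_dream[OF assms refl, of "x - y" y] by simp

lemma pcompose_X_left [simp]: "pcompose [:0, 1:] (Q :: 'a::comm_semiring_1 poly) = Q"
  by (simp add: pcompose_pCons poly_eq_iff)

lemma pcompose_power: "pcompose (P ^ n) Q = pcompose P Q ^ n"
  by (induct n) (simp_all add: pcompose_mult pcompose_1)

lemma order_power: "P \<noteq> 0 \<Longrightarrow> order a (P ^ n) = n * order a P"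
  by (induct n) (simp_all add: order_mult)

lemma poly_iter_add: "poly_iter T (m + n) = pcompose (poly_iter T m) (poly_iter T n)"
  by (induct m) (simp_all add: poly_iter_def pcompose_assoc)

lemma poly_iter_Suc: "poly_iter T (Suc k) = pcompose T (poly_iter T k)"
  by (simp add: poly_iter_def)

lemma poly_iter_1 [simp]: "poly_iter T (Suc 0) = T"
  by (simp add: poly_iter_def)

lemma poly_iter_Suc_right: "poly_iter T (Suc k) = pcompose (poly_iter T k) T"
  using poly_iter_add[of T k 1] by (simp add: poly_iter_def)

lemma poly_iter_mult: "poly_iter T (m * n) = poly_iter (poly_iter T m) n"
  by (induct n) (simp_all add: poly_iter_add poly_iter_Suc, simp add: poly_iter_def)

lemma poly_poly_iter: "poly (poly_iter T k) = poly T ^^ k"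
  by (induct k) (simp_all add: poly_iter_def poly_pcompose fun_eq_iff)

section \<open>Ultrametric absolute values\<close>

locale ultrametric =
  fixes v :: "'a::field \<Rightarrow> real"
  assumes ultrametric: "ultrametric_abs v"
begin

lemma v_nonneg [simp]: "v x \<ge> 0"
  using ultrametric unfolding ultrametric_abs_def by blast

lemma v_eq_0_iff [simp]: "v x = 0 \<longleftrightarrow> x = 0"
  using ultrametric unfolding ultrametric_abs_def by blast

lemma v_zero [simp]: "v 0 = 0"
  by simp

lemma v_mult [simp]: "v (x * y) = v x * v y"
  using ultrametric unfolding ultrametric_abs_def by blast

lemma v_add_le_max: "v (x + y) \<le> max (v x) (v y)"
  using ultrametric unfolding ultrametric_abs_def by blast

lemma v_pos_iff [simp]: "v x > 0 \<longleftrightarrow> x \<noteq> 0"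
  using v_nonneg[of x] v_eq_0_iff[of x] by linarith

lemma v_one [simp]: "v 1 = 1"
proof -
  have "v 1 * v 1 = v 1 * 1"
    using v_mult[of 1 1] by simp
  then show ?thesis
    using mult_left_cancel[of "v 1"] by simp
qed

lemma v_power [simp]: "v (x ^ n) = v x ^ n"
  by (induct n) auto

lemma v_minus [simp]: "v (- x) = v x"
proof -
  have "v (-1) ^ 2 = 1"
    using v_mult[of "-1" "-1"] by (simp add: power2_eq_square)
  then have "v (-1) = 1"
    using v_nonneg[of "-1"] by (simp add: power2_eq_1_iff)
  then show ?thesis
    using v_mult[of "-1" x] by simp
qed

lemma v_minus_commute: "v (x - y) = v (y - x)"
  using v_minus[of "x - y"] by simp

lemma v_add_le: "v x \<le> r \<Longrightarrow> v y \<le> r \<Longrightarrow> v (x + y) \<le> r"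
  using v_add_le_max[of x y] by linarith

lemma v_add_less: "v x < r \<Longrightarrow> v y < r \<Longrightarrow> v (x + y) < r"
  using v_add_le_max[of x y] by linarith

lemma v_diff_le: "v x \<le> r \<Longrightarrow> v y \<le> r \<Longrightarrow> v (x - y) \<le> r"
  using v_add_le[of x r "- y"] by simp

lemma v_add_eq_left: "v y < v x \<Longrightarrow> v (x + y) = v x"
  using v_add_le_max[of x y] v_add_le_max[of "x + y" "- y"] by simp

lemma v_sum_le: "(\<And>i. i \<in> A \<Longrightarrow> v (f i) \<le> r) \<Longrightarrow> r \<ge> 0 \<Longrightarrow> v (sum f A) \<le> r"
  by (induct A rule: infinite_finite_induct) (auto intro!: v_add_le)

lemma v_sum_less: "(\<And>i. i \<in> A \<Longrightarrow> v (f i) < r) \<Longrightarrow> r > 0 \<Longrightarrow> v (sum f A) < r"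
  by (induct A rule: infinite_finite_induct) (auto intro!: v_add_less)

lemma v_mult_less_1: "v x \<le> 1 \<Longrightarrow> v y < 1 \<Longrightarrow> v (x * y) < 1"
  using mult_right_mono[of "v x" 1 "v y"] by simp

lemma v_eq_1_if_power: "v x ^ n = 1 \<Longrightarrow> n > 0 \<Longrightarrow> v x = 1"
  using power_eq_imp_eq_base[of "v x" n 1] by simp

lemma v_less_1_if_power: "v x ^ n < 1 \<Longrightarrow> v x < 1"
  by (metis not_less one_le_power)

lemma one_plus_ne_0_if_v_less_1: "v x < 1 \<Longrightarrow> 1 + x \<noteq> 0"
  by (metis add_eq_0_iff v_one v_minus less_irrefl)

lemma v_eq_1_if_near_1: "v (x - 1) < 1 \<Longrightarrow> v x = 1"
  using v_add_eq_left[of "x - 1" 1] by simp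

lemma near_1_mult:
  assumes "v (x - 1) < 1" "v (y - 1) < 1"
  shows "v (x * y - 1) < 1"
proof -
  have "x * y - 1 = x * (y - 1) + (x - 1)"
    by (simp add: algebra_simps)
  moreover have "v (x * (y - 1)) < 1"
    using v_eq_1_if_near_1[OF assms(1)] assms(2) by simp
  ultimately show ?thesis
    using v_add_less assms(1) by metis
qed

lemma near_1_power: "v (x - 1) < 1 \<Longrightarrow> v (x ^ n - 1) < 1"
  by (induct n) (simp_all add: near_1_mult)

lemma residue_order_dvd:
  assumes q: "residue_order_is v c q" and "v c = 1" "v (c ^ k - 1) < 1"
  shows "q dvd k"
proof -
  have "q > 0" and cq: "v (c ^ q - 1) < 1" and min: "\<And>j. 0 < j \<Longrightarrow> j < q \<Longrightarrow> \<not> v (c ^ j - 1) < 1"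
    using q unfolding residue_order_is_def by auto
  define r where "r = k mod q"
  define s where "s = k div q"
  have "k = q * s + r"
    by (simp add: r_def s_def)
  then have "c ^ k = (c ^ q) ^ s * c ^ r"
    by (simp add: power_add power_mult)
  then have "c ^ r - 1 = c ^ r * (1 - (c ^ q) ^ s) + (c ^ k - 1)"
    by (simp add: algebra_simps)
  moreover have "v (c ^ r * (1 - (c ^ q) ^ s)) < 1"
    using near_1_power[OF cq, of s] \<open>v c = 1\<close> v_minus_commute[of 1 "(c ^ q) ^ s"] by simp
  ultimately have "v (c ^ r - 1) < 1"
    using assms(3) v_add_less by metis
  moreover have "r < q"
    using \<open>q > 0\<close> by (simp add: r_def)
  ultimately have "r = 0"
    using min by (meson neq0_conv)
  then show ?thesis
    by (simp add: r_def dvd_eq_mod_eq_0)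
qed

section \<open>Integral polynomials and their reductions\<close>

definition integral_poly :: "'a poly \<Rightarrow> bool" where
  "integral_poly P \<longleftrightarrow> (\<forall>n. v (coeff P n) \<le> 1)"

definition residually_zero :: "'a poly \<Rightarrow> bool" where
  "residually_zero P \<longleftrightarrow> (\<forall>n. v (coeff P n) < 1)"

lemma residually_zero_imp_integral: "residually_zero P \<Longrightarrow> integral_poly P"
  by (simp add: integral_poly_def residually_zero_def less_imp_le)

lemma integral_poly_pCons_iff [simp]: "integral_poly (pCons a P) \<longleftrightarrow> v a \<le> 1 \<and> integral_poly P"
  by (auto simp: integral_poly_def coeff_pCons split: nat.split)

lemma residually_zero_pCons_iff [simp]:
  "residually_zero (pCons a P) \<longleftrightarrow> v a < 1 \<and> residually_zero P"
  by (auto simp: residually_zero_def coeff_pCons split: nat.split)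

lemma integral_poly_0 [simp]: "integral_poly 0"
  and residually_zero_0 [simp]: "residually_zero 0"
  by (simp_all add: integral_poly_def residually_zero_def)

lemma integral_poly_1 [simp]: "integral_poly 1"
  by (simp add: one_pCons)

lemma integral_poly_add: "integral_poly P \<Longrightarrow> integral_poly Q \<Longrightarrow> integral_poly (P + Q)"
  and integral_poly_diff: "integral_poly P \<Longrightarrow> integral_poly Q \<Longrightarrow> integral_poly (P - Q)"
  and residually_zero_add: "residually_zero P \<Longrightarrow> residually_zero Q \<Longrightarrow> residually_zero (P + Q)"
  by (simp_all add: integral_poly_def residually_zero_def v_add_le v_diff_le v_add_less)

lemma integral_poly_smult: "v c \<le> 1 \<Longrightarrow> integral_poly P \<Longrightarrow> integral_poly (smult c P)"
  by (simp add: integral_poly_def mult_le_one)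

lemma integral_poly_mult: "integral_poly P \<Longrightarrow> integral_poly Q \<Longrightarrow> integral_poly (P * Q)"
  unfolding integral_poly_def coeff_mult by (auto intro!: v_sum_le mult_le_one)

lemma residually_zero_mult:
  assumes "integral_poly P" "residually_zero Q"
  shows "residually_zero (P * Q)"
  using assms unfolding integral_poly_def residually_zero_def coeff_mult
  by (auto intro!: v_sum_less v_mult_less_1[of "coeff P _" "coeff Q _", simplified])

lemma integral_poly_power: "integral_poly P \<Longrightarrow> integral_poly (P ^ n)"
  by (induct n) (auto intro: integral_poly_mult)

lemma residually_zero_power: "residually_zero P \<Longrightarrow> n > 0 \<Longrightarrow> residually_zero (P ^ n)"
  by (cases n) (auto intro: residually_zero_mult[of _ P, simplified mult.commute]
      integral_poly_power residually_zero_imp_integral)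

lemma integral_poly_pcompose:
  "integral_poly P \<Longrightarrow> integral_poly Q \<Longrightarrow> integral_poly (pcompose P Q)"
  by (induct P rule: pCons_induct)
     (auto simp: pcompose_pCons intro!: integral_poly_add integral_poly_mult)

lemma residually_zero_pcompose:
  "residually_zero P \<Longrightarrow> integral_poly Q \<Longrightarrow> residually_zero (pcompose P Q)"
  by (induct P rule: pCons_induct)
     (auto simp: pcompose_pCons intro!: residually_zero_add residually_zero_mult)

lemma v_poly_le_1:
  assumes "integral_poly P" "v z \<le> 1"
  shows "v (poly P z) \<le> 1"
  using assms unfolding poly_altdef integral_poly_def
  by (auto intro!: v_sum_le mult_le_one power_le_one)

lemma v_poly_minus_poly_0_less_1:
  assumes "integral_poly P" "v z < 1"
  shows "v (poly P z - poly P 0) < 1"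
proof -
  have "poly P z - poly P 0 = (\<Sum>i\<in>{1..degree P}. coeff P i * z ^ i)"
    by (simp add: poly_altdef poly_0_coeff_0 atMost_atLeast0 sum.atLeast_Suc_atMost)
  also have "v \<dots> < 1"
  proof (rule v_sum_less)
    fix i assume "i \<in> {1..degree P}"
    then have "v z ^ i < 1"
      using assms(2) by (simp add: power_less_one_iff)
    then show "v (coeff P i * z ^ i) < 1"
      using assms(1) v_mult_less_1[of "coeff P i" "z ^ i"] unfolding integral_poly_def by simp
  qed simp
  finally show ?thesis .
qed

lemma pcompose_minus_eq_mult:
  assumes "integral_poly G" "integral_poly F"
  obtains D where "integral_poly D" "pcompose G F - G = (F - [:0, 1:]) * D"
proof -
  have "\<exists>D. integral_poly D \<and> pcompose G F - G = (F - [:0, 1:]) * D"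
    using assms(1)
  proof (induct G rule: pCons_induct)
    case (pCons g G)
    then obtain D where D: "integral_poly D" "pcompose G F - G = (F - [:0, 1:]) * D"
      by auto
    have "pCons g G = [:g:] + [:0, 1:] * G"
      by simp
    then have "pcompose (pCons g G) F - pCons g G = F * pcompose G F - [:0, 1:] * G"
      unfolding pcompose_pCons by simp
    also have "\<dots> = (F - [:0, 1:]) * pcompose G F + [:0, 1:] * (pcompose G F - G)"
      by algebra
    also have "\<dots> = (F - [:0, 1:]) * (pcompose G F + [:0, 1:] * D)"
      unfolding D(2) by algebra
    finally show ?case
      using D(1) pCons.prems assms(2)
      by (intro exI[of _ "pcompose G F + [:0, 1:] * D"])
         (auto intro!: integral_poly_add integral_poly_mult integral_poly_pcompose)
  qed (auto intro: exI[of _ 0])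
  then show ?thesis
    using that by blast
qed

definition reduced_degree :: "'a poly \<Rightarrow> nat \<Rightarrow> bool" where
  "reduced_degree F d \<longleftrightarrow> integral_poly F \<and> v (coeff F d) = 1 \<and> (\<forall>n>d. v (coeff F n) < 1)"

lemma reduced_degree_unique: "reduced_degree F d \<Longrightarrow> reduced_degree F e \<Longrightarrow> d = e"
  unfolding reduced_degree_def by (metis less_irrefl linorder_neqE_nat)

lemma reduced_degree_exists:
  assumes "integral_poly F" "v (coeff F n) = 1"
  obtains d where "n \<le> d" "reduced_degree F d"
proof -
  define N where "N = {n. v (coeff F n) = 1}"
  have "N \<subseteq> {..degree F}"
    by (auto simp: N_def coeff_eq_0 not_le intro: ccontr)
  then have "finite N"
    using finite_subset by blast
  moreover have "n \<in> N"
    using assms(2) by (simp add: N_def)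
  moreover have "v (coeff F m) < 1" if "Max N < m" for m
    using that assms(1) \<open>finite N\<close> Max_ge[of N m]
    by (force simp: N_def integral_poly_def order.order_iff_strict)
  ultimately show ?thesis
    using that[of "Max N"] Max_in[of N] assms(1) by (auto simp: reduced_degree_def N_def)
qed

lemma reduced_degree_X: "reduced_degree [:0, 1:] 1"
  and reduced_degree_const: "v c = 1 \<Longrightarrow> reduced_degree [:c:] 0"
  by (auto simp: reduced_degree_def integral_poly_def coeff_pCons split: nat.split)

lemma reduced_degree_add_residually_zero:
  assumes "reduced_degree F d" "residually_zero H"
  shows "reduced_degree (F + H) d"
proof -
  have "v (coeff F n + coeff H n) < 1" if "d < n" for n
    using assms that by (intro v_add_less) (auto simp: reduced_degree_def residually_zero_def)
  moreover have "v (coeff F d + coeff H d) = 1"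
    using assms v_add_eq_left[of "coeff H d" "coeff F d"]
    by (simp add: reduced_degree_def residually_zero_def)
  moreover have "integral_poly (F + H)"
    using assms by (simp add: reduced_degree_def integral_poly_add residually_zero_imp_integral)
  ultimately show ?thesis
    by (simp add: reduced_degree_def)
qed

lemma reduced_degree_add_low:
  assumes "reduced_degree F d" "integral_poly H" "\<And>n. n \<ge> d \<Longrightarrow> coeff H n = 0"
  shows "reduced_degree (F + H) d"
  using assms by (auto simp: reduced_degree_def intro!: integral_poly_add)

lemma reduced_degree_mult:
  assumes F: "reduced_degree F a" and G: "reduced_degree G b"
  shows "reduced_degree (F * G) (a + b)"
proof -
  have small: "v (coeff F i * coeff G j) < 1" if "a < i \<or> b < j" for i j
    using that F G unfolding reduced_degree_def integral_poly_def
    by (metis v_mult v_mult_less_1 mult.commute)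
  have "coeff (F * G) (a + b) = coeff F a * coeff G b +
          (\<Sum>i\<in>{..a + b} - {a}. coeff F i * coeff G (a + b - i))"
    unfolding coeff_mult by (subst sum.remove[of _ a]) auto
  also have "v \<dots> = 1"
  proof -
    have "v (\<Sum>i\<in>{..a + b} - {a}. coeff F i * coeff G (a + b - i)) < 1"
    proof (rule v_sum_less)
      fix i assume "i \<in> {..a + b} - {a}"
      then have "a < i \<or> b < a + b - i"
        by auto
      then show "v (coeff F i * coeff G (a + b - i)) < 1"
        by (rule small)
    qed simp
    then show ?thesis
      using F G v_add_eq_left by (simp add: reduced_degree_def)
  qed
  finally have "v (coeff (F * G) (a + b)) = 1" .
  moreover have "v (coeff (F * G) n) < 1" if "a + b < n" for n
    unfolding coeff_mult using that by (intro v_sum_less small) auto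
  ultimately show ?thesis
    using F G by (simp add: reduced_degree_def integral_poly_mult)
qed

lemma reduced_degree_power: "reduced_degree F d \<Longrightarrow> reduced_degree (F ^ n) (n * d)"
  using reduced_degree_const[of 1] by (induct n) (auto simp: reduced_degree_mult one_pCons)

lemma reduced_degree_pcompose:
  assumes "reduced_degree F a" "reduced_degree G b" "b \<ge> 1"
  shows "reduced_degree (pcompose F G) (a * b)"
  using assms(1)
proof (induct F arbitrary: a rule: pCons_induct)
  case 0
  then show ?case by (simp add: reduced_degree_def)
next
  case (pCons f F)
  have G: "integral_poly G"
    using assms(2) by (simp add: reduced_degree_def)
  show ?case
  proof (cases a)
    case 0
    then have "v f = 1" "\<forall>n>0. v (coeff (pCons f F) n) < 1"
      using pCons.prems by (simp_all add: reduced_degree_def)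
    moreover from this(2) have "residually_zero F"
      unfolding residually_zero_def by (metis coeff_pCons_Suc zero_less_Suc)
    ultimately show ?thesis
      using 0 G by (auto simp: pcompose_pCons intro!: reduced_degree_add_residually_zero
          reduced_degree_const residually_zero_mult[of G] residually_zero_pcompose)
  next
    case (Suc a')
    then have "reduced_degree F a'" "v f \<le> 1"
      using pCons.prems by (auto simp: reduced_degree_def)
    then have "reduced_degree (pcompose F G * G + [:f:]) (a' * b + b)"
      using pCons.hyps assms(2,3)
      by (intro reduced_degree_add_low reduced_degree_mult)
         (auto simp: integral_poly_def coeff_pCons split: nat.split)
    then show ?thesis
      using Suc by (simp add: pcompose_pCons mult.commute add.commute)
  qed
qed

lemma reduced_degree_poly_iter:
  assumes "reduced_degree Q d" "d \<ge> 1"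
  shows "reduced_degree (poly_iter Q k) (d ^ k)"
proof (induct k)
  case 0
  then show ?case
    using reduced_degree_X by (simp add: poly_iter_def)
next
  case (Suc k)
  then show ?case
    using reduced_degree_pcompose[OF assms(1) Suc] assms(2)
    by (simp add: poly_iter_def mult.commute)
qed

end

section \<open>Roots in the maximal ideal\<close>

locale alg_closed_ultrametric = ultrametric v for v :: "'a::alg_closed_field \<Rightarrow> real"
begin

lemma v_coeff_le_v_coeff_0_if_no_small_root:
  assumes "f \<noteq> 0" "\<And>x. poly f x = 0 \<Longrightarrow> v x \<ge> 1"
  shows "v (coeff f n) \<le> v (coeff f 0)"
  using assms
proof (induct "degree f" arbitrary: f n rule: less_induct)
  case less
  show ?case
  proof (cases "degree f = 0")
    case True
    then show ?thesis
      by (cases n) (auto simp: coeff_eq_0)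
  next
    case False
    then obtain r where "poly f r = 0"
      using alg_closed_imp_poly_has_root by blast
    then obtain g where g: "f = [:- r, 1:] * g" and "v r \<ge> 1"
      using less.prems(2) by (metis dvdE poly_eq_0_iff_dvd)
    moreover from g have "g \<noteq> 0"
      using less.prems(1) by auto
    moreover from this have "degree f = Suc (degree g)"
      unfolding g by (subst degree_mult_eq) auto
    moreover have "poly g x = 0 \<Longrightarrow> v x \<ge> 1" for x
      using less.prems(2)[of x] g by simp
    ultimately have IH: "v (coeff g m) \<le> v (coeff g 0)" for m
      using less.hyps by simp
    have g0: "v (coeff g 0) \<le> v r * v (coeff g 0)"
      using \<open>v r \<ge> 1\<close> mult_right_mono[of 1 "v r" "v (coeff g 0)"] by simp
    show ?thesis
    proof (cases n)
      case (Suc m)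
      have "coeff f n = - r * coeff g n + coeff g m"
        using g Suc by simp
      then have "v (coeff f n) \<le> max (v (- r * coeff g n)) (v (coeff g m))"
        using v_add_le_max by metis
      moreover have "v (- r * coeff g n) \<le> v r * v (coeff g 0)"
        using IH[of n] \<open>v r \<ge> 1\<close> by (simp add: mult_left_mono)
      ultimately show ?thesis
        using IH[of m] g0 g by simp
    qed simp
  qed
qed

lemma exists_small_root:
  assumes "v (coeff f 0) < 1" "v (coeff f n) = 1"
  obtains x where "poly f x = 0" "v x < 1"
proof -
  have "f \<noteq> 0"
    using assms(2) by auto
  then show ?thesis
    using v_coeff_le_v_coeff_0_if_no_small_root[of f n] assms that by force
qed

end

locale ultrametric_char_p = ultrametric v for v :: "'a::field \<Rightarrow> real" +
  fixes p :: nat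
  assumes prime_p: "prime p" and CHAR_eq: "CHAR('a) = p"
begin

lemma p_pos: "p > 0"
  using prime_p prime_gt_0_nat by blast

lemma power_p_add: "(x + y) ^ p = x ^ p + (y :: 'a) ^ p"
  using freshmans_dream[where x = x and y = y] prime_p CHAR_eq by simp

lemma power_p_diff: "(x - y) ^ p = x ^ p - (y :: 'a) ^ p"
  using freshmans_dream_diff[of x y] prime_p CHAR_eq by simp

lemma poly_power_p_diff: "(P - Q) ^ p = P ^ p - (Q :: 'a poly) ^ p"
  using freshmans_dream_diff[of P Q] prime_p CHAR_eq by simp

lemma power_p_inj: "x ^ p = y ^ p \<Longrightarrow> x = (y :: 'a)"
  using power_p_diff[of x y] p_pos by simp

lemma v_of_nat_eq_1:
  assumes "\<not> p dvd k"
  shows "v (of_nat k :: 'a) = 1"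
proof -
  let ?x = "of_nat k :: 'a"
  have "?x \<noteq> 0"
    using assms CHAR_eq by (simp add: of_nat_eq_0_iff_char_dvd)
  moreover have "?x ^ p = ?x"
    by (induct k) (simp_all add: power_p_add zero_power[OF p_pos] add.commute)
  ultimately have "?x * ?x ^ (p - 1) = ?x * 1"
    using p_pos by (simp flip: power_Suc)
  then have "v ?x ^ (p - 1) = 1"
    using \<open>?x \<noteq> 0\<close> by (simp flip: v_power)
  moreover have "p - 1 > 0"
    using prime_ge_2_nat[OF prime_p] by simp
  ultimately show ?thesis
    by (rule v_eq_1_if_power)
qed

lemma v_sum_powers_eq_1:
  assumes "v (x - 1) < 1" "v (y - 1) < 1" "\<not> p dvd k"
  shows "v (\<Sum>i<k. x ^ (k - Suc i) * y ^ i) = 1"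
proof -
  let ?S = "\<Sum>i<k. x ^ (k - Suc i) * y ^ i"
  have "?S - of_nat k = (\<Sum>i<k. x ^ (k - Suc i) * y ^ i - 1)"
    by (simp add: sum_subtractf)
  also have "v \<dots> < 1"
    by (intro v_sum_less near_1_mult near_1_power assms) simp
  finally have "v (?S - of_nat k) < v (of_nat k)"
    using v_of_nat_eq_1[OF assms(3)] by simp
  then show ?thesis
    using v_add_eq_left v_of_nat_eq_1[OF assms(3)] by fastforce
qed

section \<open>Polynomials of the form \<open>c z W(z)^p\<close>\<close>

text \<open>The auxiliary \<open>\<nu>\<close> is a \<open>p\<close>-th root of \<open>1/c\<close>; it turns the fixed point equation
  into \<open>T(z) - z = c z (W(z) - \<nu>)^p\<close>, see \<open>frob_form_minus_X\<close>.\<close>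
definition frob_form :: "'a poly \<Rightarrow> 'a \<Rightarrow> 'a poly \<Rightarrow> 'a \<Rightarrow> bool" where
  "frob_form T c W \<nu> \<longleftrightarrow>
     T = [:c:] * ([:0, 1:] * W ^ p) \<and> v c = 1 \<and> integral_poly W \<and> poly W 0 = 1 \<and> c * \<nu> ^ p = 1"

lemma frob_formD:
  assumes "frob_form T c W \<nu>"
  shows "T = [:c:] * ([:0, 1:] * W ^ p)" "v c = 1" "integral_poly W" "poly W 0 = 1" "c * \<nu> ^ p = 1"
  using assms unfolding frob_form_def by blast+

lemma frob_form_v_nu:
  assumes "frob_form T c W \<nu>"
  shows "v \<nu> = 1"
proof -
  have "v c * v \<nu> ^ p = 1"
    using frob_formD(5)[OF assms] by (metis v_mult v_power v_one)
  then show ?thesis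
    using frob_formD(2)[OF assms] p_pos v_eq_1_if_power by simp
qed

lemma frob_form_integral_poly:
  assumes "frob_form T c W \<nu>"
  shows "integral_poly T" "integral_poly (W - [:\<nu>:])"
  using frob_formD[OF assms] frob_form_v_nu[OF assms]
  by (auto intro!: integral_poly_smult integral_poly_power integral_poly_diff)

lemma frob_form_minus_X:
  assumes "frob_form T c W \<nu>"
  shows "T - [:0, 1:] = [:c:] * ([:0, 1:] * (W - [:\<nu>:]) ^ p)"
proof -
  have "[:c:] * [:\<nu> ^ p:] = 1"
    using frob_formD(5)[OF assms] by (simp add: one_pCons mult.commute)
  then show ?thesis
    using frob_formD(1)[OF assms] by (simp add: poly_power_p_diff poly_const_pow algebra_simps)
qed

lemma frob_form_fixed_point_iff:
  assumes "frob_form T c W \<nu>"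
  shows "poly T a = a \<longleftrightarrow> a = 0 \<or> poly (W - [:\<nu>:]) a = 0"
proof -
  have "poly T a - a = c * a * poly (W - [:\<nu>:]) a ^ p"
    using arg_cong[OF frob_form_minus_X[OF assms], of "\<lambda>P. poly P a"] by (simp add: algebra_simps)
  moreover have "c \<noteq> 0"
    using frob_formD(2)[OF assms] by auto
  ultimately show ?thesis
    using p_pos by (auto simp: zero_power)
qed

lemma frob_form_poly_diff_nu_0_eq_0_iff:
  assumes "frob_form T c W \<nu>"
  shows "poly (W - [:\<nu>:]) 0 = 0 \<longleftrightarrow> c = 1"
  using frob_formD(4,5)[OF assms] power_p_inj[of \<nu> 1] by auto

lemma frob_form_poly_iter_eq:
  assumes T: "frob_form T c W \<nu>"
  obtains M where "integral_poly M"
    "poly_iter T k = [:c ^ k:] * ([:0, 1:] * (W ^ k + [:0, 1:] * (W - [:\<nu>:]) ^ p * M) ^ p)"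
proof -
  define G where "G = W - [:\<nu>:]"
  have W: "integral_poly W" and G: "integral_poly G" and TX: "T - [:0, 1:] = [:c:] * ([:0, 1:] * G ^ p)"
    using frob_formD(3)[OF T] frob_form_integral_poly(2)[OF T] frob_form_minus_X[OF T] by (simp_all add: G_def)
  have "\<exists>M. integral_poly M \<and> poly_iter T k = [:c ^ k:] * ([:0, 1:] * (W ^ k + [:0, 1:] * G ^ p * M) ^ p)"
  proof (induct k)
    case 0
    show ?case
      by (intro exI[of _ 0]) (simp add: poly_iter_def)
  next
    case (Suc k)
    \<comment> \<open>\<open>T^(k+1) = T^k \<circ> T\<close>, and \<open>V \<circ> T \<equiv> V\<close> modulo \<open>T - z = c z (W - \<nu>)^p\<close>\<close>
    then obtain M where M: "integral_poly M"
      "poly_iter T k = [:c ^ k:] * ([:0, 1:] * (W ^ k + [:0, 1:] * G ^ p * M) ^ p)"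
      by blast
    define V where "V = W ^ k + [:0, 1:] * G ^ p * M"
    have "integral_poly V" "integral_poly T"
      using M(1) W G frob_form_integral_poly(1)[OF T]
      by (auto simp: V_def intro!: integral_poly_add integral_poly_mult integral_poly_power)
    then obtain D where D: "integral_poly D" "pcompose V T - V = (T - [:0, 1:]) * D"
      by (rule pcompose_minus_eq_mult)
    have "poly_iter T (Suc k) = [:c ^ k:] * (T * pcompose V T ^ p)"
      by (simp only: poly_iter_Suc_right M(2) V_def[symmetric] pcompose_mult pcompose_power
          pcompose_const pcompose_X_left)
    also have "\<dots> = [:c ^ k:] * [:c:] * ([:0, 1:] * (W * pcompose V T) ^ p)"
      using frob_formD(1)[OF T] by (simp add: power_mult_distrib algebra_simps)
    also have "W * pcompose V T = W ^ Suc k + [:0, 1:] * G ^ p * (W * M + [:c:] * W * D)"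
      using D(2) unfolding TX V_def by (simp add: algebra_simps eq_diff_eq)
    finally show ?case
      using M(1) D(1) W frob_formD(2)[OF T]
      by (intro exI[of _ "W * M + [:c:] * W * D"])
         (auto intro!: integral_poly_add integral_poly_mult integral_poly_smult)
  qed
  then show ?thesis
    using that unfolding G_def by blast
qed

lemma frob_form_power_nu_power:
  assumes "frob_form T c W \<nu>"
  shows "c ^ k * (\<nu> ^ k) ^ p = 1"
proof -
  have "(\<nu> ^ k) ^ p = (\<nu> ^ p) ^ k"
    by (simp flip: power_mult add: mult.commute)
  then show ?thesis
    using frob_formD(5)[OF assms] by (simp flip: power_mult_distrib)
qed

lemma frob_form_poly_iter:
  assumes T: "frob_form T c W \<nu>"
  obtains M where "integral_poly M"
    "frob_form (poly_iter T k) (c ^ k) (W ^ k + [:0, 1:] * (W - [:\<nu>:]) ^ p * M) (\<nu> ^ k)"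
proof -
  obtain M where M: "integral_poly M"
    "poly_iter T k = [:c ^ k:] * ([:0, 1:] * (W ^ k + [:0, 1:] * (W - [:\<nu>:]) ^ p * M) ^ p)"
    by (rule frob_form_poly_iter_eq[OF T])
  have "c ^ k * (\<nu> ^ k) ^ p = 1"
    by (rule frob_form_power_nu_power[OF T])
  moreover have "integral_poly (W ^ k + [:0, 1:] * (W - [:\<nu>:]) ^ p * M)"
    using M(1) frob_formD(3)[OF T] frob_form_integral_poly(2)[OF T]
    by (intro integral_poly_add integral_poly_mult integral_poly_power) simp_all
  ultimately show ?thesis
    using that M frob_formD(2,4)[OF T] unfolding frob_form_def by simp
qed

lemma frob_form_poly_iter_p:
  assumes T: "frob_form T c W \<nu>"
  obtains W' E where "frob_form (poly_iter T p) (c ^ p) W' (\<nu> ^ p)"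
    "W' - [:\<nu> ^ p:] = (W - [:\<nu>:]) ^ p * E" "\<And>a. v a < 1 \<Longrightarrow> poly E a \<noteq> 0"
proof -
  obtain M where M: "integral_poly M"
    "frob_form (poly_iter T p) (c ^ p) (W ^ p + [:0, 1:] * (W - [:\<nu>:]) ^ p * M) (\<nu> ^ p)"
    by (rule frob_form_poly_iter[OF T])
  have "W ^ p + [:0, 1:] * (W - [:\<nu>:]) ^ p * M - [:\<nu> ^ p:]
      = (W ^ p - [:\<nu> ^ p:]) + [:0, 1:] * (W - [:\<nu>:]) ^ p * M"
    by (simp add: algebra_simps)
  also have "W ^ p - [:\<nu> ^ p:] = (W - [:\<nu>:]) ^ p"
    by (simp add: poly_power_p_diff poly_const_pow)
  finally have "W ^ p + [:0, 1:] * (W - [:\<nu>:]) ^ p * M - [:\<nu> ^ p:] = (W - [:\<nu>:]) ^ p * (1 + [:0, 1:] * M)"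
    by (simp add: algebra_simps)
  moreover have "poly (1 + [:0, 1:] * M) a \<noteq> 0" if "v a < 1" for a
    using one_plus_ne_0_if_v_less_1[of "a * poly M a"] v_poly_le_1[OF M(1), of a] that
      v_mult_less_1[of "poly M a" a] by (simp add: mult.commute)
  ultimately show ?thesis
    using that M(2) by blast
qed

lemma frob_form_nu_near_1:
  assumes T: "frob_form T c W \<nu>" and "v (c - 1) < 1"
  shows "v (\<nu> - 1) < 1"
proof -
  have "(\<nu> - 1) ^ p = \<nu> ^ p * (1 - c)"
    using power_p_diff[of \<nu> 1] frob_formD(5)[OF T] by (simp add: algebra_simps)
  from arg_cong[OF this, of v] have "v (\<nu> - 1) ^ p = v (c - 1)"
    using frob_form_v_nu[OF T] v_minus_commute[of 1 c] by simp
  then have "v (\<nu> - 1) ^ p < 1"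
    using assms(2) by simp
  then show ?thesis
    by (rule v_less_1_if_power)
qed

section \<open>Periodic points\<close>

lemma frob_form_periodic_point_equation:
  assumes T: "frob_form T c W \<nu>" and a: "v a \<le> 1" "a \<noteq> 0" "(poly T ^^ k) a = a"
  obtains m where "v m \<le> 1" "c ^ k * (poly W a ^ k + a * poly (W - [:\<nu>:]) a ^ p * m) ^ p = 1"
proof -
  obtain M where M: "integral_poly M"
    "poly_iter T k = [:c ^ k:] * ([:0, 1:] * (W ^ k + [:0, 1:] * (W - [:\<nu>:]) ^ p * M) ^ p)"
    by (rule frob_form_poly_iter_eq[OF T])
  have "a * (c ^ k * (poly W a ^ k + a * poly (W - [:\<nu>:]) a ^ p * poly M a) ^ p) = a * 1"
    using arg_cong[OF M(2), of "\<lambda>P. poly P a"] a(3) by (simp add: poly_poly_iter algebra_simps)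
  then show ?thesis
    using that[of "poly M a"] v_poly_le_1[OF M(1) a(1)] a(2) by simp
qed

lemma frob_form_periodic_point_residue:
  assumes T: "frob_form T c W \<nu>" and a: "v a < 1" "a \<noteq> 0" "(poly T ^^ k) a = a"
  shows "v (c ^ k - 1) < 1"
proof -
  obtain m where m: "v m \<le> 1" "c ^ k * (poly W a ^ k + a * poly (W - [:\<nu>:]) a ^ p * m) ^ p = 1"
    using frob_form_periodic_point_equation[OF T _ a(2,3)] a(1) by auto
  define V where "V = poly W a ^ k + a * poly (W - [:\<nu>:]) a ^ p * m"
  have "v (poly W a - 1) < 1"
    using v_poly_minus_poly_0_less_1[OF frob_formD(3)[OF T] a(1)] frob_formD(4)[OF T] by simp
  then have "v (poly W a ^ k - 1) < 1"
    by (rule near_1_power)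
  moreover have "v (a * (poly (W - [:\<nu>:]) a ^ p * m)) < 1"
    using v_poly_le_1[OF frob_form_integral_poly(2)[OF T], of a] a(1) m(1)
    by (intro v_mult_less_1[of _ a, simplified mult.commute]) (simp_all add: mult_le_one power_le_one)
  moreover have "V - 1 = (poly W a ^ k - 1) + a * (poly (W - [:\<nu>:]) a ^ p * m)"
    by (simp add: V_def)
  ultimately have "v (V - 1) < 1"
    using v_add_less by metis
  then have "v (V ^ p - 1) < 1"
    by (rule near_1_power)
  moreover have "c ^ k - 1 = c ^ k * (1 - V ^ p)"
    using m(2) by (simp add: V_def algebra_simps)
  ultimately show ?thesis
    using frob_formD(2)[OF T] v_minus_commute[of 1 "V ^ p"] by simp
qed

text \<open>For \<open>p \<nmid> k\<close>, \<open>W(a)^k - \<nu>^k = y S\<close> with \<open>y = W(a) - \<nu>\<close> and \<open>S \<equiv> k\<close> a unit, whereas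
  periodicity makes it \<open>-a y^p m\<close>; so \<open>|y| \<le> |a| |y|^p < |y|\<close> unless \<open>y = 0\<close>.\<close>
lemma frob_form_periodic_point_root_coprime:
  assumes T: "frob_form T c W \<nu>" "v (c - 1) < 1"
    and a: "v a < 1" "a \<noteq> 0" "(poly T ^^ k) a = a" and "\<not> p dvd k"
  shows "poly (W - [:\<nu>:]) a = 0"
proof (rule ccontr)
  define w where "w = poly W a"
  define y where "y = poly (W - [:\<nu>:]) a"
  assume "poly (W - [:\<nu>:]) a \<noteq> 0"
  then have "v y > 0"
    by (simp add: y_def)
  obtain m where m: "v m \<le> 1" "c ^ k * (w ^ k + a * y ^ p * m) ^ p = 1"
    using frob_form_periodic_point_equation[OF T(1) _ a(2,3)] a(1) unfolding w_def y_def by auto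
  have "c ^ k * (\<nu> ^ k) ^ p = 1"
    by (rule frob_form_power_nu_power[OF T(1)])
  with m(2) have "(w ^ k + a * y ^ p * m) ^ p = (\<nu> ^ k) ^ p"
    using frob_formD(2)[OF T(1)] by (metis mult_left_cancel power_not_zero v_eq_0_iff zero_neq_one)
  then have "w ^ k + a * y ^ p * m = \<nu> ^ k"
    by (rule power_p_inj)
  then have "w ^ k - \<nu> ^ k = - (a * y ^ p * m)"
    by (simp add: algebra_simps)
  moreover have "w ^ k - \<nu> ^ k = y * (\<Sum>i<k. \<nu> ^ (k - Suc i) * w ^ i)"
    by (simp add: power_diff_sumr2 w_def y_def)
  moreover have "v (\<Sum>i<k. \<nu> ^ (k - Suc i) * w ^ i) = 1"
    using frob_form_nu_near_1[OF T] v_poly_minus_poly_0_less_1[OF frob_formD(3)[OF T(1)] a(1)]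
      frob_formD(4)[OF T(1)] \<open>\<not> p dvd k\<close> by (intro v_sum_powers_eq_1) (simp_all add: w_def)
  ultimately have "v y = v a * v m * v y ^ p"
    by (metis v_minus v_mult v_power mult_1_right mult.commute mult.assoc)
  also have "\<dots> < v y ^ p"
    using a(1) m(1) \<open>v y > 0\<close> v_mult_less_1[of m a] by (simp add: mult.commute)
  also have "\<dots> \<le> v y"
    using v_poly_le_1[OF frob_form_integral_poly(2)[OF T(1)], of a] a(1) p_pos
    by (simp add: y_def power_le_imp_le_exp power_decreasing[of 1 p, simplified])
  finally show False
    by simp
qed

lemma frob_form_periodic_point_root:
  assumes "frob_form T c W \<nu>" "v (c - 1) < 1" "v a < 1" "a \<noteq> 0" "(poly T ^^ k) a = a" "k > 0"
  shows "poly (W - [:\<nu>:]) a = 0"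
  using assms
proof (induct k arbitrary: T c W \<nu> rule: less_induct)
  case (less k)
  show ?case
  proof (cases "p dvd k")
    case False
    then show ?thesis
      using frob_form_periodic_point_root_coprime less.prems by blast
  next
    case True
    \<comment> \<open>\<open>a\<close> has period \<open>k / p\<close> under \<open>T^p\<close>, whose \<open>W' - \<nu>^p\<close> is \<open>(W - \<nu>)^p\<close> times a unit\<close>
    then obtain k' where k: "k = p * k'"
      by blast
    then have "0 < k'" "k' < k"
      using less.prems(6) prime_ge_2_nat[OF prime_p] by auto
    obtain W' E where W': "frob_form (poly_iter T p) (c ^ p) W' (\<nu> ^ p)"
      and E: "W' - [:\<nu> ^ p:] = (W - [:\<nu>:]) ^ p * E" "poly E a \<noteq> 0"
      using frob_form_poly_iter_p[OF less.prems(1)] less.prems(3) by metis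
    have "v (c ^ p - 1) < 1"
      using power_p_diff[of c 1, symmetric] less.prems(2) p_pos by (simp add: power_less_one_iff)
    moreover have "(poly (poly_iter T p) ^^ k') a = a"
      using less.prems(5) k by (simp add: poly_poly_iter funpow_mult)
    ultimately have "poly (W' - [:\<nu> ^ p:]) a = 0"
      using less.hyps[OF \<open>k' < k\<close> W'] less.prems(3,4) \<open>0 < k'\<close> by blast
    then show ?thesis
      using E p_pos by simp
  qed
qed

section \<open>Multiplicities of fixed points\<close>

lemma frob_form_minus_X_ne_0:
  assumes "frob_form T c W \<nu>" "W - [:\<nu>:] \<noteq> 0"
  shows "T - [:0, 1:] \<noteq> 0"
  using assms frob_formD(2)[OF assms(1)] by (auto simp: frob_form_minus_X[OF assms(1)])

lemma frob_form_order_minus_X: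
  assumes "frob_form T c W \<nu>" "W - [:\<nu>:] \<noteq> 0" "a \<noteq> 0"
  shows "order a (T - [:0, 1:]) = p * order a (W - [:\<nu>:])"
proof -
  let ?G = "W - [:\<nu>:]"
  have "c \<noteq> 0"
    using frob_formD(2)[OF assms(1)] by auto
  then have nz: "[:c:] * ([:0, 1:] * ?G ^ p) \<noteq> 0" and nz': "[:0, 1:] * ?G ^ p \<noteq> 0"
    using assms(2) by simp_all
  have "order a ([:c:] * ([:0, 1:] * ?G ^ p)) = order a [:c:] + (order a [:0, 1:] + order a (?G ^ p))"
    unfolding order_mult[OF nz] order_mult[OF nz'] ..
  also have "\<dots> = p * order a ?G"
    using \<open>c \<noteq> 0\<close> assms(2,3) by (simp add: order_power order_0I)
  finally show ?thesis
    unfolding frob_form_minus_X[OF assms(1)] .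
qed

lemma frob_form_order_poly_iter_p_power:
  assumes "frob_form T c W \<nu>" "W - [:\<nu>:] \<noteq> 0" "v a < 1" "a \<noteq> 0"
  shows "order a (poly_iter T (p ^ n) - [:0, 1:]) = p ^ n * order a (T - [:0, 1:])"
  using assms(1,2)
proof (induct n arbitrary: T c W \<nu>)
  case 0
  then show ?case
    by simp
next
  case (Suc n)
  obtain W' E where W': "frob_form (poly_iter T p) (c ^ p) W' (\<nu> ^ p)"
    and E: "W' - [:\<nu> ^ p:] = (W - [:\<nu>:]) ^ p * E" "poly E a \<noteq> 0"
    using frob_form_poly_iter_p[OF Suc.prems(1)] assms(3) by metis
  then have "W' - [:\<nu> ^ p:] \<noteq> 0"
    using Suc.prems(2) by auto
  have "order a (poly_iter T (p ^ Suc n) - [:0, 1:])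
      = p ^ n * order a (poly_iter T p - [:0, 1:])"
    using Suc.hyps[OF W' \<open>W' - [:\<nu> ^ p:] \<noteq> 0\<close>] by (simp add: poly_iter_mult)
  also have "order a (poly_iter T p - [:0, 1:]) = p * order a (W' - [:\<nu> ^ p:])"
    using frob_form_order_minus_X[OF W' \<open>W' - [:\<nu> ^ p:] \<noteq> 0\<close> assms(4)] .
  also have "order a (W' - [:\<nu> ^ p:]) = p * order a (W - [:\<nu>:])"
    using E Suc.prems(2) order_mult[of "(W - [:\<nu>:]) ^ p" E a] \<open>W' - [:\<nu> ^ p:] \<noteq> 0\<close>
    by (simp add: order_power order_0I)
  also have "p * order a (W - [:\<nu>:]) = order a (T - [:0, 1:])"
    using frob_form_order_minus_X[OF Suc.prems assms(4)] ..
  finally show ?case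
    by simp
qed

lemma frob_form_periodic_points:
  assumes T: "frob_form T c W \<nu>" and q: "residue_order_is v c q"
    and R: "frob_form (poly_iter T q) (c ^ q) W' \<nu>'"
  shows "{a. v a < 1 \<and> a \<noteq> 0 \<and> (\<exists>m>0. (poly T ^^ m) a = a)}
       = {a. v a < 1 \<and> a \<noteq> 0 \<and> poly (W' - [:\<nu>':]) a = 0}"
proof (intro set_eqI iffI)
  fix a
  assume "a \<in> {a. v a < 1 \<and> a \<noteq> 0 \<and> (\<exists>m>0. (poly T ^^ m) a = a)}"
  then obtain m where a: "v a < 1" "a \<noteq> 0" and m: "0 < m" "(poly T ^^ m) a = a"
    by blast
  have "q dvd m"
    using residue_order_dvd[OF q frob_formD(2)[OF T]] frob_form_periodic_point_residue[OF T a m(2)] .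
  then obtain s where "m = q * s"
    by blast
  then have "0 < s" "(poly (poly_iter T q) ^^ s) a = a"
    using m by (simp_all add: poly_poly_iter funpow_mult)
  moreover have "v (c ^ q - 1) < 1"
    using q by (simp add: residue_order_is_def)
  ultimately show "a \<in> {a. v a < 1 \<and> a \<noteq> 0 \<and> poly (W' - [:\<nu>':]) a = 0}"
    using frob_form_periodic_point_root[OF R _ a] a by simp
next
  fix a
  assume a: "a \<in> {a. v a < 1 \<and> a \<noteq> 0 \<and> poly (W' - [:\<nu>':]) a = 0}"
  then have "(poly T ^^ q) a = a"
    using frob_form_fixed_point_iff[OF R, of a] by (simp add: poly_poly_iter)
  then show "a \<in> {a. v a < 1 \<and> a \<noteq> 0 \<and> (\<exists>m>0. (poly T ^^ m) a = a)}"
    using a q by (auto simp: residue_order_is_def)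
qed

lemma frob_form_minimal_period:
  assumes T: "frob_form T c W \<nu>" and q: "residue_order_is v c q"
    and a: "v a < 1" "a \<noteq> 0" "(poly T ^^ q) a = a"
  shows "minimal_period (poly T) a = q"
  unfolding minimal_period_def
proof (rule Least_equality)
  show "0 < q \<and> (poly T ^^ q) a = a"
    using q a(3) by (simp add: residue_order_is_def)
  show "q \<le> m" if "0 < m \<and> (poly T ^^ m) a = a" for m
    using that residue_order_dvd[OF q frob_formD(2)[OF T] frob_form_periodic_point_residue[OF T a(1,2)]]
    by (auto intro: dvd_imp_le)
qed

lemma frob_form_fixed_point_multiplicities:
  assumes "frob_form T c W \<nu>" "W - [:\<nu>:] \<noteq> 0" "v a < 1" "a \<noteq> 0"
  shows "T - [:0, 1:] \<noteq> 0 \<and> p dvd order a (T - [:0, 1:])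
    \<and> (\<forall>n. order a (poly_iter T (p ^ n) - [:0, 1:]) = p ^ n * order a (T - [:0, 1:]))"
  using frob_form_minus_X_ne_0[OF assms(1,2)] frob_form_order_minus_X[OF assms(1,2,4)]
    frob_form_order_poly_iter_p_power[OF assms] by simp

lemma frob_form_poly_iter_unit_coeff:
  assumes T: "frob_form T c W \<nu>" and "v (coeff (W - 1) n) = 1" "q > 0"
    and R: "frob_form (poly_iter T q) c' W' \<nu>'"
  obtains m where "v (coeff (W' - [:\<nu>':]) m) = 1"
proof (rule ccontr)
  \<comment> \<open>otherwise \<open>T^q\<close> would reduce to \<open>z\<close>, but its reduction has degree \<open>(1 + p d)^q\<close>\<close>
  assume "\<not> thesis"
  then have "residually_zero (W' - [:\<nu>':])"
    using that frob_form_integral_poly(2)[OF R]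
    by (auto simp: residually_zero_def integral_poly_def order.order_iff_strict)
  then have "residually_zero (poly_iter T q - [:0, 1:])"
    using frob_formD(2)[OF R] p_pos unfolding frob_form_minus_X[OF R]
    by (intro residually_zero_mult residually_zero_power) auto
  then have "reduced_degree (poly_iter T q) 1"
    using reduced_degree_add_residually_zero[OF reduced_degree_X] by fastforce
  have "coeff (W - 1) 0 = 0"
    using frob_formD(4)[OF T] by (simp add: poly_0_coeff_0)
  then have "n > 0"
    using assms(2) by (cases n) auto
  then have "coeff (W - 1) n = coeff W n"
    by simp
  then have "v (coeff W n) = 1"
    using assms(2) by simp
  then obtain d where "n \<le> d" "reduced_degree W d"
    by (rule reduced_degree_exists[OF frob_formD(3)[OF T]])
  then have "d \<ge> 1" "reduced_degree W d"
    using \<open>n > 0\<close> by simp_all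
  then have "reduced_degree T (0 + (1 + p * d))"
    unfolding frob_formD(1)[OF T]
    using reduced_degree_const[OF frob_formD(2)[OF T]] reduced_degree_X
      reduced_degree_power[OF \<open>reduced_degree W d\<close>, of p]
    by (intro reduced_degree_mult)
  then have "reduced_degree (poly_iter T q) ((1 + p * d) ^ q)"
    by (intro reduced_degree_poly_iter) auto
  then have "(1 + p * d) ^ q = 1"
    using reduced_degree_unique \<open>reduced_degree (poly_iter T q) 1\<close> by blast
  then show False
    using \<open>d \<ge> 1\<close> p_pos \<open>q > 0\<close> by simp
qed

end

locale alg_closed_ultrametric_char_p = ultrametric_char_p v p for v :: "'a::alg_closed_field \<Rightarrow> real" and p
begin

sublocale alg_closed_ultrametric v ..

lemma frob_form_poly_iter_exists_small_root:
  assumes T: "frob_form T c W \<nu>" and "v (coeff (W - 1) n) = 1"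
    and q: "residue_order_is v c q" "c ^ q \<noteq> 1"
    and R: "frob_form (poly_iter T q) (c ^ q) W' \<nu>'"
  obtains a where "v a < 1" "a \<noteq> 0" "poly (W' - [:\<nu>':]) a = 0"
proof -
  have "v (c ^ q - 1) < 1" "q > 0"
    using q(1) by (simp_all add: residue_order_is_def)
  then have "v (coeff (W' - [:\<nu>':]) 0) < 1"
    using frob_form_nu_near_1[OF R] frob_formD(4)[OF R] v_minus_commute[of 1 \<nu>']
    by (simp flip: poly_0_coeff_0)
  moreover obtain m where "v (coeff (W' - [:\<nu>':]) m) = 1"
    using frob_form_poly_iter_unit_coeff[OF T assms(2) \<open>q > 0\<close> R] .
  ultimately obtain a where "poly (W' - [:\<nu>':]) a = 0" "v a < 1"
    by (rule exists_small_root)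
  moreover have "a \<noteq> 0"
    using calculation frob_form_poly_diff_nu_0_eq_0_iff[OF R] q(2) by auto
  ultimately show ?thesis
    using that by blast
qed

end

theorem propositionA1:
  fixes v :: "'a::alg_closed_field \<Rightarrow> real"
    and K :: "'a set" and p q :: nat and lam :: 'a and S :: "'a poly"
  assumes "prime p" and "CHAR('a) = p"
    and "ultrametric_abs v" and "is_subfield K"
    and "lam \<in> K" and "v lam = 1"
    and "residue_order_is v lam q" and "lam ^ q \<noteq> 1"
    and "\<forall>n. coeff S n \<in> K \<and> v (coeff S n) \<le> 1"
    and "poly S 0 = 1" and "wideg v (S - 1) < \<infinity>"
  shows "let Q = [:0, lam:] * S ^ p;
             F = {a. v a < 1 \<and> a \<noteq> 0 \<and> (\<exists>m>0. (poly Q ^^ m) a = a)}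
         in (\<forall>a\<in>F. minimal_period (poly Q) a = q)
          \<and> F \<noteq> {} \<and> finite F
          \<and> (\<forall>a\<in>F. poly_iter Q q - [:0, 1:] \<noteq> 0
                 \<and> p dvd order a (poly_iter Q q - [:0, 1:])
                 \<and> (\<forall>n\<ge>1. order a (poly_iter Q (q * p ^ n) - [:0, 1:])
                            = p ^ n * order a (poly_iter Q q - [:0, 1:])))"
proof -
  interpret alg_closed_ultrametric_char_p v p
    using assms(1-3) by unfold_locales
  define Q where "Q = [:0, lam:] * S ^ p"
  define F where "F = {a. v a < 1 \<and> a \<noteq> 0 \<and> (\<exists>m>0. (poly Q ^^ m) a = a)}"
  obtain \<nu> where "\<nu> ^ p = inverse lam"
    using nth_root_exists p_pos by blast
  moreover have "lam \<noteq> 0"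
    using assms(6) by auto
  ultimately have Q: "frob_form Q lam S \<nu>"
    using assms(6,9,10) by (auto simp: frob_form_def Q_def integral_poly_def)
  obtain W' where R: "frob_form (poly_iter Q q) (lam ^ q) W' (\<nu> ^ q)"
    using frob_form_poly_iter[OF Q] by metis
  have F_eq: "F = {a. v a < 1 \<and> a \<noteq> 0 \<and> poly (W' - [:\<nu> ^ q:]) a = 0}"
    unfolding F_def by (rule frob_form_periodic_points[OF Q assms(7) R])
  have "W' - [:\<nu> ^ q:] \<noteq> 0"
    using frob_form_poly_diff_nu_0_eq_0_iff[OF R] assms(8) by auto
  then have "finite F"
    unfolding F_eq by (rule finite_subset[rotated, OF poly_roots_finite]) auto
  obtain n where "v (coeff (S - 1) n) = 1"
    using assms(11) by (auto simp: wideg_def split: if_splits)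
  then have "F \<noteq> {}"
    using frob_form_poly_iter_exists_small_root[OF Q _ assms(7,8) R] unfolding F_eq by blast
  moreover have "minimal_period (poly Q) a = q" if "a \<in> F" for a
    using that frob_form_minimal_period[OF Q assms(7)] frob_form_fixed_point_iff[OF R]
    unfolding F_eq by (simp add: poly_poly_iter)
  moreover have "\<forall>a\<in>F. poly_iter Q q - [:0, 1:] \<noteq> 0 \<and> p dvd order a (poly_iter Q q - [:0, 1:])
      \<and> (\<forall>n. order a (poly_iter Q (q * p ^ n) - [:0, 1:]) = p ^ n * order a (poly_iter Q q - [:0, 1:]))"
    using frob_form_fixed_point_multiplicities[OF R \<open>W' - [:\<nu> ^ q:] \<noteq> 0\<close>] unfolding F_eq poly_iter_mult by blast
  ultimately show ?thesis
    using \<open>finite F\<close> unfolding Let_def Q_def[symmetric] F_def[symmetric] by blast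
qed

end
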